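(* Let $f(x)=\sum_{k=0}^{\infty}x^ka_k$, $a_k\in\mathbb{O}$, be a slice regular function on $\mathbb{B}$ such that $f(\mathbb{B})\subset\Pi:=\{x\in\mathbb{O}:\mathrm{Re}(x)\le1\}$, and assume $a_0=f(0)$ is real with $a_0\in[0,1)$. Then $$\mathcal{E}_f(x):=\sum_{k=0}^{\infty}|x^ka_k|+\left(\frac{1}{1+a_0}+\frac{|x|}{1-|x|}\right)\sum_{k=1}^{\infty}|x^ka_k|^2\le1$$ for all $x\in\mathbb{B}$ with $|x|\le R_*$, where $R_*\approx0.24683$ is the unique root in $(0,1)$ of $3r^3-5r^2-3r+1=0$. The constant $R_*$ cannot be improved: for every $r\in(R_*,1)$ there exist such an $f$ and $x$ with $|x|=r$ and $\mathcal{E}_f(x)>1$.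
   Context: $\mathbb{O}$ denotes the real algebra of octonions (the 8-dimensional non-commutative, non-associative but alternative normed division algebra over $\mathbb{R}$), with modulus $|x|=\sqrt{x\overline{x}}$ equal to the Euclidean norm on $\mathbb{R}^8$; the modulus is multiplicative, $|xy|=|x||y|$. For $x\in\mathbb{O}$, $\mathrm{Re}(x)=(x+\overline{x})/2$. $\mathbb{B}=\{x\in\mathbb{O}:|x|<1\}$ is the open unit ball. A slice regular function on $\mathbb{B}$ is (equivalently) a function of the form $f(x)=\sum_{k=0}^{\infty}x^ka_k$ with coefficients $a_k\in\mathbb{O}$ placed on the right, the series converging for every $x\in\mathbb{B}$ (the powers $x^k$ are unambiguous since $\mathbb{O}$ is alternative). *)

theory Defs
  imports "HOL-Analysis.Analysis"
begin

datatype quat = Q real real real real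

fun qmult :: "quat \<Rightarrow> quat \<Rightarrow> quat" where
  "qmult (Q a1 b1 c1 d1) (Q a2 b2 c2 d2) =
     Q (a1*a2 - b1*b2 - c1*c2 - d1*d2)
       (a1*b2 + b1*a2 + c1*d2 - d1*c2)
       (a1*c2 - b1*d2 + c1*a2 + d1*b2)
       (a1*d2 + b1*c2 - c1*b2 + d1*a2)"

fun qconj :: "quat \<Rightarrow> quat" where
  "qconj (Q a b c d) = Q a (-b) (-c) (-d)"

fun qadd :: "quat \<Rightarrow> quat \<Rightarrow> quat" where
  "qadd (Q a1 b1 c1 d1) (Q a2 b2 c2 d2) = Q (a1+a2) (b1+b2) (c1+c2) (d1+d2)"

fun qsub :: "quat \<Rightarrow> quat \<Rightarrow> quat" where
  "qsub (Q a1 b1 c1 d1) (Q a2 b2 c2 d2) = Q (a1-a2) (b1-b2) (c1-c2) (d1-d2)"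

text \<open>Octonions via the Cayley--Dickson construction:
  (a,b)(c,d) = (ac - d^* b, da + b c^*).\<close>
datatype octo = Oct quat quat

fun omult :: "octo \<Rightarrow> octo \<Rightarrow> octo" where
  "omult (Oct a b) (Oct c d) =
     Oct (qsub (qmult a c) (qmult (qconj d) b)) (qadd (qmult d a) (qmult b (qconj c)))"

definition oone :: octo where
  "oone = Oct (Q 1 0 0 0) (Q 0 0 0 0)"

definition oct_of_real :: "real \<Rightarrow> octo" where
  "oct_of_real r = Oct (Q r 0 0 0) (Q 0 0 0 0)"

text \<open>Powers x^k (unambiguous since octonions are alternative / power-associative).\<close>
fun opow :: "octo \<Rightarrow> nat \<Rightarrow> octo" where
  "opow x 0 = oone"
| "opow x (Suc n) = omult x (opow x n)"

fun ocomp :: "octo \<Rightarrow> nat \<Rightarrow> real" where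
  "ocomp (Oct (Q a0 a1 a2 a3) (Q a4 a5 a6 a7)) i =
     (if i = 0 then a0 else if i = 1 then a1 else if i = 2 then a2 else if i = 3 then a3
      else if i = 4 then a4 else if i = 5 then a5 else if i = 6 then a6 else a7)"

definition mk_oct :: "(nat \<Rightarrow> real) \<Rightarrow> octo" where
  "mk_oct g = Oct (Q (g 0) (g 1) (g 2) (g 3)) (Q (g 4) (g 5) (g 6) (g 7))"

definition onorm :: "octo \<Rightarrow> real" where
  "onorm x = sqrt (\<Sum>i<8. (ocomp x i)^2)"

definition ore :: "octo \<Rightarrow> real" where
  "ore x = ocomp x 0"

definition slice_regular_series :: "(nat \<Rightarrow> octo) \<Rightarrow> bool" where
  "slice_regular_series a \<longleftrightarrow>
     (\<forall>x. onorm x < 1 \<longrightarrow> (\<forall>i<8. summable (\<lambda>k. ocomp (omult (opow x k) (a k)) i)))"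

definition oseries :: "(nat \<Rightarrow> octo) \<Rightarrow> octo \<Rightarrow> octo" where
  "oseries a x = mk_oct (\<lambda>i. \<Sum>k. ocomp (omult (opow x k) (a k)) i)"

definition Ecal :: "(nat \<Rightarrow> octo) \<Rightarrow> real \<Rightarrow> octo \<Rightarrow> real" where
  "Ecal a a0 x =
     (\<Sum>k. onorm (omult (opow x k) (a k)))
     + (1 / (1 + a0) + onorm x / (1 - onorm x)) * (\<Sum>k. (onorm (omult (opow x (Suc k)) (a (Suc k))))^2)"

definition Ecal_le_1 :: "(nat \<Rightarrow> octo) \<Rightarrow> real \<Rightarrow> octo \<Rightarrow> bool" where
  "Ecal_le_1 a a0 x \<longleftrightarrow>
     summable (\<lambda>k. onorm (omult (opow x k) (a k)))
     \<and> summable (\<lambda>k. (onorm (omult (opow x (Suc k)) (a (Suc k))))^2)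
     \<and> Ecal a a0 x \<le> 1"

end

theory Submission
  imports Defs
begin

text \<open>Every octonion lies in a complex slice \<open>\<complex>\<^sub>I = \<real> + \<real>I\<close>, \<open>I\<close> a unit imaginary
  octonion, and the orthogonal projection of the octonions onto \<open>\<complex>\<^sub>I\<close> is left
  \<open>\<complex>\<^sub>I\<close>-linear. Projecting \<open>f\<close> on \<open>\<complex>\<^sub>I\<close> therefore gives a complex power series with
  coefficients \<open>\<pi>\<^sub>I(a\<^sub>k)\<close> whose real part is \<open>Re f \<le> 1\<close>; choosing \<open>I\<close> with
  \<open>a\<^sub>k \<in> \<complex>\<^sub>I\<close>, Caratheodory's inequality \<open>|c\<^sub>k| \<le> 2 (1 - Re c\<^sub>0)\<close> (proved here by
  averaging over roots of unity) gives \<open>|a\<^sub>k| \<le> 2 (1 - a\<^sub>0)\<close>. Summing geometric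
  majorants bounds \<open>E\<^sub>f(x)\<close> by \<open>M(a\<^sub>0, |x|)\<close>, and
  \<open>M(a\<^sub>0, r) \<le> a\<^sub>0 + (1 - a\<^sub>0) M(0, r)\<close>, where \<open>M(0, \<cdot>)\<close> is increasing with
  \<open>(M(0, r) - 1)(1 - r)(1 - r\<^sup>2) = -(3r\<^sup>3 - 5r\<^sup>2 - 3r + 1)\<close>. The function
  \<open>-2x/(1 - x)\<close> has \<open>E\<^sub>f(r) = M(0, r)\<close>, which exceeds \<open>1\<close> beyond the root \<open>R\<close>.\<close>

section \<open>Octonions and their complex slices\<close>

lemma octo_cases:
  obtains a0 a1 a2 a3 a4 a5 a6 a7 where "x = Oct (Q a0 a1 a2 a3) (Q a4 a5 a6 a7)"
  by (metis octo.exhaust quat.exhaust)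

lemma sum_lessThan_8: "(\<Sum>i<(8::nat). g i) = g 0 + g 1 + g 2 + g 3 + g 4 + g 5 + g 6 + (g 7 :: real)"
  by (simp add: numeral_eq_Suc lessThan_Suc)

lemma sum_squares_omult:
  "(\<Sum>i<8. ocomp (omult x y) i ^ 2) = (\<Sum>i<8. ocomp x i ^ 2) * (\<Sum>i<8. ocomp y i ^ 2)"
proof -
  obtain a0 a1 a2 a3 a4 a5 a6 a7 where x: "x = Oct (Q a0 a1 a2 a3) (Q a4 a5 a6 a7)"
    by (rule octo_cases)
  obtain b0 b1 b2 b3 b4 b5 b6 b7 where y: "y = Oct (Q b0 b1 b2 b3) (Q b4 b5 b6 b7)"
    by (rule octo_cases)
  show ?thesis
    unfolding x y sum_lessThan_8 by (simp add: power2_eq_square algebra_simps)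
qed

lemma onorm_omult: "onorm (omult x y) = onorm x * onorm y"
  unfolding onorm_def sum_squares_omult by (simp add: real_sqrt_mult)

lemma onorm_oone: "onorm oone = 1"
  unfolding onorm_def oone_def sum_lessThan_8 by simp

lemma onorm_opow: "onorm (opow x k) = onorm x ^ k"
  by (induction k) (simp_all add: onorm_omult onorm_oone)

lemma onorm_nonneg: "0 \<le> onorm x"
  unfolding onorm_def by (simp add: sum_nonneg)

lemma onorm_oct_of_real: "onorm (oct_of_real c) = \<bar>c\<bar>"
  unfolding onorm_def oct_of_real_def sum_lessThan_8 by simp

lemma abs_ocomp_le_onorm: "\<bar>ocomp x i\<bar> \<le> onorm x"
proof -
  obtain a0 a1 a2 a3 a4 a5 a6 a7 where x: "x = Oct (Q a0 a1 a2 a3) (Q a4 a5 a6 a7)"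
    by (rule octo_cases)
  have "ocomp x i ^ 2 \<le> (\<Sum>j<8. ocomp x j ^ 2)"
    unfolding x sum_lessThan_8 by (simp add: add_nonneg_nonneg)
  then show ?thesis
    unfolding onorm_def using real_sqrt_le_mono by fastforce
qed

lemma ocomp_mk_oct: "i < 8 \<Longrightarrow> ocomp (mk_oct g) i = g i"
  by (auto simp: mk_oct_def numeral_eq_Suc less_Suc_eq)

definition unit_imag :: "octo \<Rightarrow> bool" where
  "unit_imag I \<longleftrightarrow> ore I = 0 \<and> onorm I = 1"

definition slice_emb :: "octo \<Rightarrow> complex \<Rightarrow> octo" where
  "slice_emb I w = mk_oct (\<lambda>i. if i = 0 then Re w else Im w * ocomp I i)"

definition slice_proj :: "octo \<Rightarrow> octo \<Rightarrow> complex" where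
  "slice_proj I y = Complex (ore y) (\<Sum>i<8. ocomp I i * ocomp y i)"

lemma unit_imagE:
  assumes "unit_imag I"
  obtains b1 b2 b3 b4 b5 b6 b7 where "I = Oct (Q 0 b1 b2 b3) (Q b4 b5 b6 b7)"
    and "b1\<^sup>2 + b2\<^sup>2 + b3\<^sup>2 + b4\<^sup>2 + b5\<^sup>2 + b6\<^sup>2 + b7\<^sup>2 = 1"
proof -
  obtain a0 a1 a2 a3 a4 a5 a6 a7 where I: "I = Oct (Q a0 a1 a2 a3) (Q a4 a5 a6 a7)"
    by (rule octo_cases)
  have "a0 = 0"
    using assms by (simp add: unit_imag_def ore_def I)
  moreover have "a1\<^sup>2 + a2\<^sup>2 + a3\<^sup>2 + a4\<^sup>2 + a5\<^sup>2 + a6\<^sup>2 + a7\<^sup>2 = 1"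
    using assms \<open>a0 = 0\<close> by (simp add: unit_imag_def onorm_def sum_lessThan_8 I)
  ultimately show ?thesis
    using that I by simp
qed

lemma slice_emb_mult:
  assumes "unit_imag I"
  shows "omult (slice_emb I w) (slice_emb I v) = slice_emb I (w * v)"
proof -
  obtain b1 b2 b3 b4 b5 b6 b7 where I: "I = Oct (Q 0 b1 b2 b3) (Q b4 b5 b6 b7)"
    and unit: "b1\<^sup>2 + b2\<^sup>2 + b3\<^sup>2 + b4\<^sup>2 + b5\<^sup>2 + b6\<^sup>2 + b7\<^sup>2 = 1"
    using assms by (rule unit_imagE)
  have "(b1\<^sup>2 + b2\<^sup>2 + b3\<^sup>2 + b4\<^sup>2 + b5\<^sup>2 + b6\<^sup>2 + b7\<^sup>2) * (Im w * Im v) = Im w * Im v"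
    by (simp add: unit)
  then show ?thesis
    unfolding I slice_emb_def mk_oct_def by (simp add: algebra_simps power2_eq_square)
qed

lemma opow_slice_emb:
  assumes "unit_imag I"
  shows "opow (slice_emb I w) k = slice_emb I (w ^ k)"
proof (induction k)
  case 0
  then show ?case
    by (simp add: slice_emb_def mk_oct_def oone_def)
next
  case (Suc k)
  then show ?case
    by (simp add: slice_emb_mult[OF assms])
qed

lemma onorm_slice_emb:
  assumes "unit_imag I"
  shows "onorm (slice_emb I w) = norm w"
proof -
  obtain b1 b2 b3 b4 b5 b6 b7 where I: "I = Oct (Q 0 b1 b2 b3) (Q b4 b5 b6 b7)"
    and unit: "b1\<^sup>2 + b2\<^sup>2 + b3\<^sup>2 + b4\<^sup>2 + b5\<^sup>2 + b6\<^sup>2 + b7\<^sup>2 = 1"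
    using assms by (rule unit_imagE)
  have "(b1\<^sup>2 + b2\<^sup>2 + b3\<^sup>2 + b4\<^sup>2 + b5\<^sup>2 + b6\<^sup>2 + b7\<^sup>2) * (Im w)\<^sup>2 = (Im w)\<^sup>2"
    by (simp add: unit)
  then show ?thesis
    unfolding onorm_def I slice_emb_def mk_oct_def sum_lessThan_8 norm_complex_def
    by (simp add: algebra_simps power_mult_distrib)
qed

lemma slice_proj_slice_emb:
  assumes "unit_imag I"
  shows "slice_proj I (slice_emb I w) = w"
proof -
  obtain b1 b2 b3 b4 b5 b6 b7 where I: "I = Oct (Q 0 b1 b2 b3) (Q b4 b5 b6 b7)"
    and unit: "b1\<^sup>2 + b2\<^sup>2 + b3\<^sup>2 + b4\<^sup>2 + b5\<^sup>2 + b6\<^sup>2 + b7\<^sup>2 = 1"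
    using assms by (rule unit_imagE)
  have "(b1\<^sup>2 + b2\<^sup>2 + b3\<^sup>2 + b4\<^sup>2 + b5\<^sup>2 + b6\<^sup>2 + b7\<^sup>2) * Im w = Im w"
    by (simp add: unit)
  then show ?thesis
    unfolding slice_proj_def I slice_emb_def mk_oct_def sum_lessThan_8 ore_def complex_eq_iff
    by (simp add: algebra_simps power2_eq_square)
qed

text \<open>Left multiplication by \<open>I\<close> maps the orthogonal complement of \<open>\<complex>\<^sub>I\<close> into itself, so the
  projection commutes with left multiplication by elements of \<open>\<complex>\<^sub>I\<close>.\<close>
lemma slice_proj_omult_slice_emb:
  assumes "unit_imag I"
  shows "slice_proj I (omult (slice_emb I w) y) = w * slice_proj I y"
proof -
  obtain b1 b2 b3 b4 b5 b6 b7 where I: "I = Oct (Q 0 b1 b2 b3) (Q b4 b5 b6 b7)"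
    and unit: "b1\<^sup>2 + b2\<^sup>2 + b3\<^sup>2 + b4\<^sup>2 + b5\<^sup>2 + b6\<^sup>2 + b7\<^sup>2 = 1"
    using assms by (rule unit_imagE)
  obtain y0 y1 y2 y3 y4 y5 y6 y7 where y: "y = Oct (Q y0 y1 y2 y3) (Q y4 y5 y6 y7)"
    by (rule octo_cases)
  have "(b1\<^sup>2 + b2\<^sup>2 + b3\<^sup>2 + b4\<^sup>2 + b5\<^sup>2 + b6\<^sup>2 + b7\<^sup>2) * (Im w * y0) = Im w * y0"
    by (simp add: unit)
  then show ?thesis
    unfolding slice_proj_def I y slice_emb_def mk_oct_def sum_lessThan_8 ore_def complex_eq_iff
    by (simp add: algebra_simps power2_eq_square)
qed

lemma slice_proj_oct_of_real:
  assumes "unit_imag I"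
  shows "slice_proj I (oct_of_real c) = of_real c"
  using assms by (auto simp: slice_proj_def oct_of_real_def sum_lessThan_8 ore_def complex_eq_iff
      elim: unit_imagE)

lemma octo_in_slice: "\<exists>I w. unit_imag I \<and> x = slice_emb I w"
proof -
  obtain a0 a1 a2 a3 a4 a5 a6 a7 where x: "x = Oct (Q a0 a1 a2 a3) (Q a4 a5 a6 a7)"
    by (rule octo_cases)
  define s where "s = sqrt (a1\<^sup>2 + a2\<^sup>2 + a3\<^sup>2 + a4\<^sup>2 + a5\<^sup>2 + a6\<^sup>2 + a7\<^sup>2)"
  have s_sq: "s\<^sup>2 = a1\<^sup>2 + a2\<^sup>2 + a3\<^sup>2 + a4\<^sup>2 + a5\<^sup>2 + a6\<^sup>2 + a7\<^sup>2"
    unfolding s_def by (simp add: add_nonneg_nonneg)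
  show ?thesis
  proof (cases "s = 0")
    case True
    then have "a1 = 0 \<and> a2 = 0 \<and> a3 = 0 \<and> a4 = 0 \<and> a5 = 0 \<and> a6 = 0 \<and> a7 = 0"
      using s_sq by (simp add: add_nonneg_eq_0_iff add_nonneg_nonneg)
    then have "unit_imag (Oct (Q 0 1 0 0) (Q 0 0 0 0)) \<and> x = slice_emb (Oct (Q 0 1 0 0) (Q 0 0 0 0)) (of_real a0)"
      by (simp add: x unit_imag_def ore_def onorm_def sum_lessThan_8 slice_emb_def mk_oct_def)
    then show ?thesis by blast
  next
    case False
    define I where "I = Oct (Q 0 (a1/s) (a2/s) (a3/s)) (Q (a4/s) (a5/s) (a6/s) (a7/s))"
    have "(\<Sum>i<8. ocomp I i ^ 2) = (a1\<^sup>2 + a2\<^sup>2 + a3\<^sup>2 + a4\<^sup>2 + a5\<^sup>2 + a6\<^sup>2 + a7\<^sup>2) / s\<^sup>2"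
      unfolding I_def sum_lessThan_8 by (simp add: power_divide add_divide_distrib)
    also have "\<dots> = 1"
      using False by (simp flip: s_sq)
    finally have "(\<Sum>i<8. ocomp I i ^ 2) = 1" .
    then have "unit_imag I"
      by (simp add: unit_imag_def ore_def onorm_def I_def)
    moreover have "x = slice_emb I (Complex a0 s)"
      using False by (simp add: x I_def slice_emb_def mk_oct_def)
    ultimately show ?thesis by blast
  qed
qed

section \<open>Caratheodory's coefficient inequality\<close>

lemma norm_suminf_le_tail:
  fixes d :: "nat \<Rightarrow> 'a::banach" and f :: "nat \<Rightarrow> real"
  assumes f: "summable f" and le: "\<And>m. norm (d m) \<le> f m" and vanish: "\<And>m. m < n \<Longrightarrow> d m = 0"
  shows "summable d" and "norm (suminf d) \<le> (\<Sum>i. f (i + n))"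
proof -
  have norm_d: "summable (\<lambda>m. norm (d m))"
    using summable_comparison_test[of "\<lambda>m. norm (d m)" f] le f by auto
  then show d: "summable d" by (rule summable_norm_cancel)
  have "suminf d = (\<Sum>i. d (i + n))"
    using suminf_split_initial_segment[OF d, of n] vanish by simp
  also have "norm \<dots> \<le> (\<Sum>i. norm (d (i + n)))"
    by (rule summable_norm[OF summable_ignore_initial_segment[OF norm_d]])
  also have "\<dots> \<le> (\<Sum>i. f (i + n))"
    by (rule suminf_le[OF le summable_ignore_initial_segment[OF norm_d] summable_ignore_initial_segment[OF f]])
  finally show "norm (suminf d) \<le> (\<Sum>i. f (i + n))" .
qed

lemma sum_cis_power:
  assumes "N \<ge> 1"
  shows "(\<Sum>j<N. cis (2*pi/N) ^ (j*m)) = (if N dvd m then of_nat N else 0)"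
proof -
  define z where "z = cis (2*pi/N) ^ m"
  have "cis (2*pi/N) ^ N = 1"
    using assms by (simp add: Complex.DeMoivre)
  then have "z ^ N = 1"
    unfolding z_def by (metis power_mult mult.commute power_one)
  moreover have "z = 1 \<longleftrightarrow> N dvd m"
  proof -
    have "z = exp (2 * of_real pi * \<i> * of_nat m / of_nat N)" unfolding z_def
      by (simp add: cis_conv_exp DeMoivre[symmetric] exp_of_nat_mult[symmetric] algebra_simps)
    then show ?thesis using complex_root_unity_eq_1[OF assms, of m] by simp
  qed
  moreover have "(\<Sum>j<N. cis (2*pi/N) ^ (j*m)) = (\<Sum>j<N. z ^ j)"
    unfolding z_def by (intro sum.cong refl) (simp add: mult.commute flip: power_mult)
  ultimately show ?thesis by (auto simp: geometric_sum)
qed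

text \<open>What survives of \<open>\<Sum> c\<^sub>m \<rho>\<^sup>m\<close> when the series is averaged over the \<open>N\<close>-th roots of unity
  against \<open>\<zeta>\<^sup>p\<close> (see \<open>powser_sum_roots_unity\<close>).\<close>
definition aliased_coeff :: "(nat \<Rightarrow> complex) \<Rightarrow> real \<Rightarrow> nat \<Rightarrow> nat \<Rightarrow> complex" where
  "aliased_coeff c \<rho> N p = (\<Sum>m. if N dvd (m + p) then c m * of_real (\<rho> ^ m) else 0)"

lemma summable_aliased_coeff:
  fixes c :: "nat \<Rightarrow> complex"
  assumes "summable (\<lambda>m. norm (c m) * \<rho> ^ m)" "0 \<le> \<rho>"
  shows "summable (\<lambda>m. if N dvd (m + p) then c m * of_real (\<rho> ^ m) else 0)"
  by (rule summable_norm_cancel, rule summable_comparison_test[OF _ assms(1)])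
     (use assms(2) in \<open>auto simp: norm_mult norm_power\<close>)

lemma powser_sum_roots_unity:
  fixes c :: "nat \<Rightarrow> complex" and N :: nat
  defines "\<zeta> \<equiv> cis (2*pi/N)"
  assumes N: "N \<ge> 1" and abs_summable: "summable (\<lambda>m. norm (c m) * \<rho> ^ m)" and \<rho>: "0 \<le> \<rho>"
  shows "(\<Sum>j<N. (\<Sum>m. c m * (of_real \<rho> * \<zeta> ^ j) ^ m) * \<zeta> ^ (j*p)) = of_nat N * aliased_coeff c \<rho> N p"
proof -
  have term_eq: "c m * (of_real \<rho> * \<zeta> ^ j) ^ m * \<zeta> ^ (j*p) = c m * of_real (\<rho> ^ m) * \<zeta> ^ (j*(m+p))" for m j
    by (simp add: power_mult_distrib power_add distrib_left mult_ac flip: power_mult)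
  have summable_j: "summable (\<lambda>m. c m * (of_real \<rho> * \<zeta> ^ j) ^ m)" for j
    by (rule summable_norm_cancel, rule summable_comparison_test[OF _ abs_summable])
       (use \<rho> in \<open>simp add: \<zeta>_def norm_mult norm_power\<close>)
  have summable_jp: "summable (\<lambda>m. c m * of_real (\<rho> ^ m) * \<zeta> ^ (j*(m+p)))" for j
    using summable_mult2[OF summable_j, of j "\<zeta> ^ (j*p)"] unfolding term_eq .
  have "(\<Sum>j<N. (\<Sum>m. c m * (of_real \<rho> * \<zeta> ^ j) ^ m) * \<zeta> ^ (j*p))
      = (\<Sum>j<N. \<Sum>m. c m * of_real (\<rho> ^ m) * \<zeta> ^ (j*(m+p)))"
    by (simp add: suminf_mult2[OF summable_j] term_eq)
  also have "\<dots> = (\<Sum>m. \<Sum>j<N. c m * of_real (\<rho> ^ m) * \<zeta> ^ (j*(m+p)))"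
    by (intro suminf_sum[symmetric] summable_jp)
  also have "\<dots> = (\<Sum>m. of_nat N * (if N dvd (m + p) then c m * of_real (\<rho> ^ m) else 0))"
    using sum_cis_power[OF N, folded \<zeta>_def]
    by (intro suminf_cong) (simp flip: sum_distrib_left)
  also have "\<dots> = of_nat N * aliased_coeff c \<rho> N p"
    unfolding aliased_coeff_def by (rule suminf_mult[OF summable_aliased_coeff[OF abs_summable \<rho>]])
  finally show ?thesis .
qed

lemma cnj_cis_power:
  assumes "k \<le> N" "N \<ge> 1"
  shows "cnj (cis (2*pi/N) ^ (j*k)) = cis (2*pi/N) ^ (j*(N-k))"
proof -
  define \<zeta> where "\<zeta> = cis (2*pi/N)"
  have norm_\<zeta>: "norm (\<zeta> ^ n) = 1" for n
    by (simp add: \<zeta>_def norm_power)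
  have "\<zeta> ^ (j*k) * \<zeta> ^ (j*(N-k)) = (\<zeta> ^ N) ^ j"
    using assms by (simp add: mult.commute diff_mult_distrib2 flip: power_add power_mult)
  also have "\<dots> = 1"
    using assms by (simp add: \<zeta>_def Complex.DeMoivre)
  finally have "\<zeta> ^ (j*k) * \<zeta> ^ (j*(N-k)) = 1" .
  moreover have "\<zeta> \<noteq> 0"
    by (simp add: \<zeta>_def)
  ultimately have "\<zeta> ^ (j*(N-k)) = 1 / \<zeta> ^ (j*k)"
    by (simp add: eq_divide_eq mult.commute)
  then show ?thesis
    using divide_conv_cnj[OF norm_\<zeta>, of 1] by (simp add: \<zeta>_def)
qed

lemma Re_weight_expand:
  "(1 - Re g) * (1 + Re (\<eta> * u)) = Re (1 - g + \<eta> * u - \<eta> * (g * u) / 2 - cnj \<eta> * (g * cnj u) / 2)"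
  by (simp add: field_simps)

text \<open>A discrete form of the Caratheodory argument: the weights \<open>1 + Re (\<eta> \<zeta>\<^sup>j\<^sup>k)\<close> and
  \<open>1 - Re g(\<rho> \<zeta>\<^sup>j)\<close> are nonnegative, and averaging their product over the \<open>N\<close>-th roots of
  unity \<open>\<zeta>\<^sup>j\<close> leaves only the aliased coefficients of index \<open>0\<close>, \<open>k\<close> and \<open>N - k\<close>.\<close>
lemma aliased_coeff_positivity:
  fixes c :: "nat \<Rightarrow> complex" and N k :: nat
  defines "\<zeta> \<equiv> cis (2*pi/N)"
  assumes k: "1 \<le> k" "k < N"
    and abs_summable: "summable (\<lambda>m. norm (c m) * \<rho> ^ m)" and \<rho>: "0 \<le> \<rho>"
    and re_le: "\<And>j. Re (\<Sum>m. c m * (of_real \<rho> * \<zeta> ^ j) ^ m) \<le> 1"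
    and \<eta>: "norm \<eta> = 1"
  shows "Re (aliased_coeff c \<rho> N 0) + Re (\<eta> * aliased_coeff c \<rho> N k) / 2
           + Re (cnj \<eta> * aliased_coeff c \<rho> N (N - k)) / 2 \<le> 1"
proof -
  define G where "G j = (\<Sum>m. c m * (of_real \<rho> * \<zeta> ^ j) ^ m)" for j
  define A where "A p = aliased_coeff c \<rho> N p" for p
  have N: "N \<ge> 1" using k by simp
  have average: "(\<Sum>j<N. G j * \<zeta> ^ (j*p)) = of_nat N * A p" for p
    unfolding G_def A_def \<zeta>_def by (rule powser_sum_roots_unity[OF N abs_summable \<rho>])
  have cnj_\<zeta>: "cnj (\<zeta> ^ (j*k)) = \<zeta> ^ (j*(N-k))" for j
    unfolding \<zeta>_def by (rule cnj_cis_power) (use k in simp_all)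
  have "(\<Sum>j<N. \<zeta> ^ (j*k)) = 0"
    using sum_cis_power[OF N, of k, folded \<zeta>_def] k by (auto dest: dvd_imp_le)
  have "0 \<le> (\<Sum>j<N. (1 - Re (G j)) * (1 + Re (\<eta> * \<zeta> ^ (j*k))))"
  proof (rule sum_nonneg)
    fix j
    have "\<bar>Re (\<eta> * \<zeta> ^ (j*k))\<bar> \<le> 1"
      using abs_Re_le_cmod[of "\<eta> * \<zeta> ^ (j*k)"] by (simp add: \<zeta>_def norm_mult norm_power \<eta>)
    then show "0 \<le> (1 - Re (G j)) * (1 + Re (\<eta> * \<zeta> ^ (j*k)))"
      using re_le[of j] by (simp add: G_def)
  qed
  also have "\<dots> = Re (\<Sum>j<N. 1 - G j + \<eta> * \<zeta> ^ (j*k)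
              - \<eta> * (G j * \<zeta> ^ (j*k)) / 2 - cnj \<eta> * (G j * \<zeta> ^ (j*(N-k))) / 2)"
    unfolding Re_sum Re_weight_expand by (simp only: cnj_\<zeta>)
  also have "\<dots> = Re (of_nat N - of_nat N * A 0 + \<eta> * (\<Sum>j<N. \<zeta> ^ (j*k))
                     - \<eta> * (of_nat N * A k) / 2 - cnj \<eta> * (of_nat N * A (N-k)) / 2)"
    using average[of 0]
    by (simp add: sum.distrib sum_subtractf sum_divide_distrib sum_distrib_left flip: average)
  also have "\<dots> = real N * (1 - Re (A 0) - Re (\<eta> * A k) / 2 - Re (cnj \<eta> * A (N-k)) / 2)"
    using \<open>(\<Sum>j<N. \<zeta> ^ (j*k)) = 0\<close> by (simp add: algebra_simps)
  finally have "0 \<le> real N * (1 - Re (A 0) - Re (\<eta> * A k) / 2 - Re (cnj \<eta> * A (N-k)) / 2)" .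
  then have "0 \<le> 1 - Re (A 0) - Re (\<eta> * A k) / 2 - Re (cnj \<eta> * A (N-k)) / 2"
    using N by (metis zero_le_mult_iff not_le of_nat_0_less_iff less_le_trans zero_less_one)
  then show ?thesis
    unfolding A_def by linarith
qed

lemma norm_aliased_coeff_le:
  fixes c :: "nat \<Rightarrow> complex"
  assumes "summable (\<lambda>m. norm (c m) * \<rho> ^ m)" "0 \<le> \<rho>"
    and "\<And>m. m < n \<Longrightarrow> \<not> N dvd (m + p)"
  shows "norm (aliased_coeff c \<rho> N p) \<le> (\<Sum>i. norm (c (i + n)) * \<rho> ^ (i + n))"
  unfolding aliased_coeff_def
  by (rule norm_suminf_le_tail(2)[OF assms(1)]) (use assms(2,3) in \<open>auto simp: norm_mult norm_power\<close>)

lemma norm_aliased_coeff_diff_le: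
  fixes c :: "nat \<Rightarrow> complex"
  assumes abs_summable: "summable (\<lambda>m. norm (c m) * \<rho> ^ m)" and \<rho>: "0 \<le> \<rho>"
    and m0: "N dvd (m0 + p)" and unique: "\<And>m. m < n \<Longrightarrow> N dvd (m + p) \<Longrightarrow> m = m0"
  shows "norm (aliased_coeff c \<rho> N p - c m0 * of_real (\<rho> ^ m0))
           \<le> (\<Sum>i. norm (c (i + n)) * \<rho> ^ (i + n))"
proof -
  define X where "X m = c m * of_real (\<rho> ^ m)" for m
  define d where "d m = (if N dvd (m + p) \<and> m \<noteq> m0 then X m else 0)" for m
  have d: "summable d" "norm (suminf d) \<le> (\<Sum>i. norm (c (i + n)) * \<rho> ^ (i + n))"
    by (rule norm_suminf_le_tail[OF abs_summable]; use \<rho> unique in \<open>force simp: d_def X_def norm_mult norm_power\<close>)+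
  have "(\<lambda>m. d m + (if m = m0 then X m else 0)) sums (suminf d + X m0)"
    by (intro sums_add summable_sums[OF d(1)] sums_single)
  moreover have "(\<lambda>m. d m + (if m = m0 then X m else 0)) = (\<lambda>m. if N dvd (m + p) then X m else 0)"
    using m0 by (auto simp: d_def)
  ultimately have "(\<Sum>m. if N dvd (m + p) then X m else 0) = suminf d + X m0"
    by (simp add: sums_iff)
  then have "aliased_coeff c \<rho> N p = suminf d + X m0"
    unfolding aliased_coeff_def X_def .
  then show ?thesis
    using d(2) by (simp add: X_def)
qed

lemma unit_rotation_to_norm:
  fixes z :: complex
  obtains \<eta> where "norm \<eta> = 1" and "cnj \<eta> * z = of_real (norm z)"
proof (cases "z = 0")
  case False
  have "cnj (sgn z) * z = (cnj z * z) / of_real (norm z)"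
    by (simp add: sgn_div_norm scaleR_conv_of_real field_simps)
  also have "cnj z * z = of_real (norm z ^ 2)"
    by (simp only: complex_norm_square mult.commute)
  finally have "cnj (sgn z) * z = of_real (norm z)"
    using False by (simp add: power2_eq_square)
  then show ?thesis
    using False that[of "sgn z"] by (simp add: norm_sgn)
qed (use that[of 1] in simp)

lemma Re_unit_mult_ge:
  fixes \<eta> z :: complex
  assumes "norm \<eta> = 1"
  shows "- norm z \<le> Re (\<eta> * z)"
  using abs_Re_le_cmod[of "\<eta> * z"] assms by (simp add: norm_mult)

lemma aliased_coeff_tail_bounds:
  fixes c :: "nat \<Rightarrow> complex" and \<rho> :: real and n k :: nat
  defines "T \<equiv> (\<Sum>i. norm (c (i + n)) * \<rho> ^ (i + n))" and "A \<equiv> aliased_coeff c \<rho> (n + k)"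
  assumes k: "1 \<le> k" and n: "1 \<le> n"
    and abs_summable: "summable (\<lambda>m. norm (c m) * \<rho> ^ m)" and \<rho>: "0 \<le> \<rho>"
  shows "norm (A 0 - c 0) \<le> T" and "norm (A k) \<le> T" and "norm (A n - c k * of_real (\<rho> ^ k)) \<le> T"
proof -
  have "norm (A 0 - c 0 * of_real (\<rho> ^ 0)) \<le> T"
    unfolding A_def T_def
    by (rule norm_aliased_coeff_diff_le[OF abs_summable \<rho>]) (auto dest: dvd_imp_le)
  then show "norm (A 0 - c 0) \<le> T"
    by simp
  show "norm (A k) \<le> T"
    unfolding A_def T_def
    by (rule norm_aliased_coeff_le[OF abs_summable \<rho>]) (use k in \<open>auto dest: dvd_imp_le\<close>)
  show "norm (A n - c k * of_real (\<rho> ^ k)) \<le> T"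
    unfolding A_def T_def
  proof (rule norm_aliased_coeff_diff_le[OF abs_summable \<rho>])
    fix m assume m: "m < n" and "n + k dvd m + n"
    then obtain q where q: "m + n = (n + k) * q"
      by (auto simp: dvd_def)
    have "q = 1"
    proof (rule ccontr)
      assume "q \<noteq> 1"
      then have "q = 0 \<or> 2 \<le> q"
        by auto
      then show False
        using q m n mult_le_mono2[of 2 q "n + k"] by auto
    qed
    with q show "m = k"
      by simp
  qed (simp add: add.commute)
qed

lemma caratheodory_coeff_approx:
  fixes c :: "nat \<Rightarrow> complex" and \<rho> :: real and n k :: nat
  defines "T \<equiv> (\<Sum>i. norm (c (i + n)) * \<rho> ^ (i + n))"
  assumes k: "1 \<le> k" and n: "1 \<le> n"
    and abs_summable: "summable (\<lambda>m. norm (c m) * \<rho> ^ m)" and \<rho>: "0 \<le> \<rho>"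
    and re_le: "\<And>w. norm w = \<rho> \<Longrightarrow> Re (\<Sum>m. c m * w ^ m) \<le> 1"
  shows "\<rho> ^ k * norm (c k) \<le> 2 * (1 - Re (c 0)) + 4 * T"
proof -
  define A where "A = aliased_coeff c \<rho> (n + k)"
  obtain \<eta> where \<eta>: "norm \<eta> = 1" "norm (cnj \<eta>) = 1" and peak: "cnj \<eta> * c k = of_real (norm (c k))"
    by (metis complex_mod_cnj unit_rotation_to_norm)
  have "Re (A 0) + Re (\<eta> * A k) / 2 + Re (cnj \<eta> * A n) / 2 \<le> 1"
    using aliased_coeff_positivity[of k "n + k" c \<rho> \<eta>] k n abs_summable \<rho> re_le \<eta>
    by (simp add: A_def norm_mult norm_power)
  moreover have "Re (c 0) \<le> Re (A 0) + T"
    using aliased_coeff_tail_bounds(1)[OF k n abs_summable \<rho>] abs_Re_le_cmod[of "A 0 - c 0"]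
    by (simp add: A_def T_def)
  moreover have "- T \<le> Re (\<eta> * A k)"
    using aliased_coeff_tail_bounds(2)[OF k n abs_summable \<rho>] Re_unit_mult_ge[OF \<eta>(1), of "A k"]
    by (simp add: A_def T_def)
  moreover have "\<rho> ^ k * norm (c k) - T \<le> Re (cnj \<eta> * A n)"
  proof -
    have "Re (cnj \<eta> * A n) = Re (cnj \<eta> * (A n - c k * of_real (\<rho> ^ k))) + \<rho> ^ k * norm (c k)"
      by (simp add: right_diff_distrib mult.assoc[symmetric] peak)
    then show ?thesis
      using aliased_coeff_tail_bounds(3)[OF k n abs_summable \<rho>]
        Re_unit_mult_ge[OF \<eta>(2), of "A n - c k * of_real (\<rho> ^ k)"]
      by (simp add: A_def T_def)
  qed
  ultimately have "\<rho> ^ k * norm (c k) + 2 * Re (c 0) \<le> 2 + 4 * T"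
    by linarith
  then show ?thesis
    by (simp add: algebra_simps)
qed

lemma caratheodory_coeff_bound_radius:
  fixes c :: "nat \<Rightarrow> complex" and \<rho> :: real
  assumes k: "1 \<le> k"
    and abs_summable: "summable (\<lambda>m. norm (c m) * \<rho> ^ m)" and \<rho>: "0 \<le> \<rho>"
    and re_le: "\<And>w. norm w = \<rho> \<Longrightarrow> Re (\<Sum>m. c m * w ^ m) \<le> 1"
  shows "\<rho> ^ k * norm (c k) \<le> 2 * (1 - Re (c 0))"
proof (rule field_le_epsilon)
  fix \<epsilon> :: real assume "0 < \<epsilon>"
  then obtain n0 where n0: "\<And>n. n \<ge> n0 \<Longrightarrow> norm (\<Sum>i. norm (c (i + n)) * \<rho> ^ (i + n)) < \<epsilon> / 4"
    using suminf_exist_split[OF _ abs_summable, of "\<epsilon> / 4"] by auto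
  have "\<rho> ^ k * norm (c k)
      \<le> 2 * (1 - Re (c 0)) + 4 * (\<Sum>i. norm (c (i + (n0 + 1))) * \<rho> ^ (i + (n0 + 1)))"
    by (rule caratheodory_coeff_approx[OF k _ abs_summable \<rho> re_le]) simp_all
  also have "\<dots> \<le> 2 * (1 - Re (c 0)) + \<epsilon>"
    using n0[of "n0 + 1"] by simp
  finally show "\<rho> ^ k * norm (c k) \<le> 2 * (1 - Re (c 0)) + \<epsilon>" .
qed

theorem caratheodory_coeff_bound:
  fixes c :: "nat \<Rightarrow> complex"
  assumes summable: "\<And>w. norm w < 1 \<Longrightarrow> summable (\<lambda>m. c m * w ^ m)"
    and re_le: "\<And>w. norm w < 1 \<Longrightarrow> Re (\<Sum>m. c m * w ^ m) \<le> 1"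
    and k: "1 \<le> k"
  shows "norm (c k) \<le> 2 * (1 - Re (c 0))"
proof -
  have "\<rho> ^ k * norm (c k) \<le> 2 * (1 - Re (c 0))" if \<rho>: "0 < \<rho>" "\<rho> < 1" for \<rho> :: real
  proof (rule caratheodory_coeff_bound_radius[OF k _ less_imp_le[OF \<rho>(1)]])
    have norm_half: "norm (complex_of_real ((1 + \<rho>) / 2)) = (1 + \<rho>) / 2"
      using \<rho> by (simp only: norm_of_real) simp
    have "summable (\<lambda>m. norm (c m * of_real \<rho> ^ m))"
      by (rule powser_insidea[OF summable[of "of_real ((1 + \<rho>) / 2)"]])
         (simp_all only: norm_half norm_of_real, use \<rho> in auto)
    then show "summable (\<lambda>m. norm (c m) * \<rho> ^ m)"
      using \<rho> by (simp add: norm_mult norm_power)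
  qed (use \<rho> re_le in auto)
  then have "eventually (\<lambda>\<rho>. \<rho> ^ k * norm (c k) \<le> 2 * (1 - Re (c 0))) (at_left 1)"
    using eventually_at_left_real[of 0 "1::real"] by (auto elim: eventually_mono)
  moreover have "((\<lambda>\<rho>. \<rho> ^ k * norm (c k)) \<longlongrightarrow> 1 ^ k * norm (c k)) (at_left (1::real))"
    by (intro tendsto_intros)
  ultimately show ?thesis
    using tendsto_upperbound by fastforce
qed

section \<open>Slice regular series and their coefficients\<close>

lemma slice_proj_oseries_sums:
  assumes a: "slice_regular_series a" and I: "unit_imag I" and w: "norm w < 1"
  shows "(\<lambda>m. slice_proj I (a m) * w ^ m) sums slice_proj I (oseries a (slice_emb I w))"
proof -
  define x where "x = slice_emb I w"
  define t where "t i = (\<lambda>m. ocomp (omult (opow x m) (a m)) i)" for i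
  have t_sums: "t i sums ocomp (oseries a x) i" if "i < 8" for i
  proof -
    have "onorm x < 1"
      using w by (simp add: x_def onorm_slice_emb[OF I])
    then have "summable (t i)"
      using a that by (simp add: slice_regular_series_def t_def)
    then show ?thesis
      using that by (simp add: oseries_def ocomp_mk_oct t_def summable_sums)
  qed
  have "slice_proj I (a m) * w ^ m = slice_proj I (omult (opow x m) (a m))" for m
    by (simp add: x_def opow_slice_emb[OF I] slice_proj_omult_slice_emb[OF I] mult.commute)
  moreover have "(\<lambda>m. slice_proj I (omult (opow x m) (a m))) sums slice_proj I (oseries a x)"
    unfolding sums_complex_iff slice_proj_def complex.sel ore_def
  proof
    show "(\<lambda>m. ocomp (omult (opow x m) (a m)) 0) sums ocomp (oseries a x) 0"
      using t_sums[of 0] by (simp add: t_def)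
    show "(\<lambda>m. \<Sum>i<8. ocomp I i * ocomp (omult (opow x m) (a m)) i)
            sums (\<Sum>i<8. ocomp I i * ocomp (oseries a x) i)"
      by (intro sums_sum sums_mult) (use t_sums in \<open>simp add: t_def\<close>)
  qed
  ultimately show ?thesis
    by (simp add: x_def)
qed

lemma onorm_coeff_le:
  assumes a: "slice_regular_series a" and re_le: "\<forall>x. onorm x < 1 \<longrightarrow> ore (oseries a x) \<le> 1"
    and a0: "a 0 = oct_of_real a0" and k: "1 \<le> k"
  shows "onorm (a k) \<le> 2 * (1 - a0)"
proof -
  obtain I w0 where I: "unit_imag I" and ak: "a k = slice_emb I w0"
    using octo_in_slice by blast
  define c where "c m = slice_proj I (a m)" for m
  have c_sums: "(\<lambda>m. c m * w ^ m) sums slice_proj I (oseries a (slice_emb I w))" if "norm w < 1" for w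
    unfolding c_def by (rule slice_proj_oseries_sums[OF a I that])
  have "norm (c k) \<le> 2 * (1 - Re (c 0))"
  proof (rule caratheodory_coeff_bound[OF _ _ k])
    fix w :: complex assume w: "norm w < 1"
    show "summable (\<lambda>m. c m * w ^ m)"
      using c_sums[OF w] by (rule sums_summable)
    have "Re (\<Sum>m. c m * w ^ m) = ore (oseries a (slice_emb I w))"
      using c_sums[OF w] by (simp add: sums_iff slice_proj_def)
    also have "\<dots> \<le> 1"
      using re_le w by (simp add: onorm_slice_emb[OF I])
    finally show "Re (\<Sum>m. c m * w ^ m) \<le> 1" .
  qed
  then show ?thesis
    by (simp add: c_def ak slice_proj_slice_emb[OF I] onorm_slice_emb[OF I] a0
        slice_proj_oct_of_real[OF I])
qed

lemma slice_regular_series_bounded: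
  assumes "\<And>k. onorm (a k) \<le> C"
  shows "slice_regular_series a"
  unfolding slice_regular_series_def
proof (intro allI impI)
  fix x :: octo and i :: nat assume x: "onorm x < 1" and "i < 8"
  show "summable (\<lambda>k. ocomp (omult (opow x k) (a k)) i)"
  proof (rule summable_comparison_test)
    show "summable (\<lambda>k. C * onorm x ^ k)"
      using x onorm_nonneg[of x] by (intro summable_mult summable_geometric) simp
    have "\<bar>ocomp (omult (opow x k) (a k)) i\<bar> \<le> C * onorm x ^ k" for k
    proof -
      have "\<bar>ocomp (omult (opow x k) (a k)) i\<bar> \<le> onorm (a k) * onorm x ^ k"
        using abs_ocomp_le_onorm[of "omult (opow x k) (a k)" i]
        by (simp add: onorm_omult onorm_opow mult.commute)
      also have "\<dots> \<le> C * onorm x ^ k"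
        by (rule mult_right_mono[OF assms]) (simp add: onorm_nonneg)
      finally show ?thesis .
    qed
    then show "\<exists>N. \<forall>k\<ge>N. norm (ocomp (omult (opow x k) (a k)) i) \<le> C * onorm x ^ k"
      by simp
  qed
qed

section \<open>The majorant of \<open>E\<^sub>f\<close>\<close>

definition bohr_majorant :: "real \<Rightarrow> real \<Rightarrow> real" where
  "bohr_majorant a0 r = a0 + 2 * (1 - a0) * (r / (1 - r))
     + (1 / (1 + a0) + r / (1 - r)) * (4 * (1 - a0)\<^sup>2 * (r\<^sup>2 / (1 - r\<^sup>2)))"

lemma geometric_majorant:
  fixes t :: "nat \<Rightarrow> real"
  assumes t_nonneg: "\<And>k. 0 \<le> t k" and t_Suc: "\<And>k. t (Suc k) \<le> B * r ^ Suc k"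
    and r: "0 \<le> r" "r < 1"
  shows "summable t" and "suminf t \<le> t 0 + B * (r / (1 - r))"
    and "summable (\<lambda>k. (t (Suc k))\<^sup>2)" and "(\<Sum>k. (t (Suc k))\<^sup>2) \<le> B\<^sup>2 * (r\<^sup>2 / (1 - r\<^sup>2))"
proof -
  have "r\<^sup>2 < 1"
    using r by (simp add: power_less_one_iff)
  have geom: "(\<lambda>k. B * r ^ Suc k) sums (B * r * (1 / (1 - r)))"
    using sums_mult[OF geometric_sums, of r "B * r"] r by (simp add: mult.assoc)
  have geom2: "(\<lambda>k. B\<^sup>2 * (r\<^sup>2) ^ Suc k) sums (B\<^sup>2 * r\<^sup>2 * (1 / (1 - r\<^sup>2)))"
    using sums_mult[OF geometric_sums, of "r\<^sup>2" "B\<^sup>2 * r\<^sup>2"] \<open>r\<^sup>2 < 1\<close> by (simp add: mult.assoc)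
  have t_Suc2: "(t (Suc k))\<^sup>2 \<le> B\<^sup>2 * (r\<^sup>2) ^ Suc k" for k
  proof -
    have "(B * r ^ Suc k)\<^sup>2 = B\<^sup>2 * (r\<^sup>2) ^ Suc k"
      by (metis power_mult mult.commute power_mult_distrib)
    then show ?thesis
      using power_mono[OF t_Suc[of k] t_nonneg[of "Suc k"], of 2] by simp
  qed
  have sum_Suc: "summable (\<lambda>k. t (Suc k))"
    by (rule summable_comparison_test[OF _ sums_summable[OF geom]]) (use t_Suc t_nonneg in auto)
  then show "summable t"
    by (simp only: summable_Suc_iff)
  then show "suminf t \<le> t 0 + B * (r / (1 - r))"
    using suminf_split_head suminf_le[OF t_Suc sum_Suc sums_summable[OF geom]] sums_unique[OF geom]
    by fastforce
  show sum2: "summable (\<lambda>k. (t (Suc k))\<^sup>2)"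
    by (rule summable_comparison_test[OF _ sums_summable[OF geom2]]) (use t_Suc2 in auto)
  show "(\<Sum>k. (t (Suc k))\<^sup>2) \<le> B\<^sup>2 * (r\<^sup>2 / (1 - r\<^sup>2))"
    using suminf_le[OF t_Suc2 sum2 sums_summable[OF geom2]] sums_unique[OF geom2] by simp
qed

lemma Ecal_le_bohr_majorant:
  assumes a0: "onorm (a 0) \<le> a0" and coeff: "\<And>k. 1 \<le> k \<Longrightarrow> onorm (a k) \<le> 2 * (1 - a0)"
    and x: "onorm x < 1"
  shows "summable (\<lambda>k. onorm (omult (opow x k) (a k)))"
    and "summable (\<lambda>k. (onorm (omult (opow x (Suc k)) (a (Suc k))))\<^sup>2)"
    and "Ecal a a0 x \<le> bohr_majorant a0 (onorm x)"
proof -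
  define r where "r = onorm x"
  define B where "B = 2 * (1 - a0)"
  define t where "t k = onorm (omult (opow x k) (a k))" for k
  have r: "0 \<le> r" "r < 1"
    using x onorm_nonneg[of x] by (simp_all add: r_def)
  have t_nonneg: "0 \<le> t k" for k
    by (simp add: t_def onorm_nonneg)
  have t_Suc: "t (Suc k) \<le> B * r ^ Suc k" for k
    using mult_left_mono[OF coeff[of "Suc k"], of "r ^ Suc k"] r
    by (simp add: t_def r_def B_def onorm_omult onorm_opow mult.commute)
  note majorant = geometric_majorant[OF t_nonneg t_Suc r]
  show "summable (\<lambda>k. onorm (omult (opow x k) (a k)))"
    using majorant(1) by (simp only: t_def[abs_def])
  show "summable (\<lambda>k. (onorm (omult (opow x (Suc k)) (a (Suc k))))\<^sup>2)"
    using majorant(3) by (simp only: t_def)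
  have "0 \<le> a0" "0 \<le> B"
    using a0 coeff[of 1] onorm_nonneg[of "a 0"] onorm_nonneg[of "a 1"] by (simp_all add: B_def)
  then have "(1 / (1 + a0) + r / (1 - r)) * (\<Sum>k. (t (Suc k))\<^sup>2)
      \<le> (1 / (1 + a0) + r / (1 - r)) * (B\<^sup>2 * (r\<^sup>2 / (1 - r\<^sup>2)))"
    using majorant(4) r by (intro mult_left_mono) simp_all
  moreover have "t 0 \<le> a0"
    using a0 by (simp add: t_def onorm_omult onorm_oone)
  ultimately have "Ecal a a0 x
      \<le> a0 + B * (r / (1 - r)) + (1 / (1 + a0) + r / (1 - r)) * (B\<^sup>2 * (r\<^sup>2 / (1 - r\<^sup>2)))"
    using majorant(2) unfolding Ecal_def t_def r_def by linarith
  also have "\<dots> = bohr_majorant a0 (onorm x)"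
    unfolding bohr_majorant_def B_def r_def power_mult_distrib by simp
  finally show "Ecal a a0 x \<le> bohr_majorant a0 (onorm x)" .
qed

lemma bohr_majorant_zero: "bohr_majorant 0 r = 2 * (r / (1 - r)) + 4 * (r\<^sup>2 / (1 - r\<^sup>2)) * (1 + r / (1 - r))"
  unfolding bohr_majorant_def by (simp add: algebra_simps)

lemma bohr_majorant_le_affine:
  assumes a0: "0 \<le> a0" "a0 \<le> 1" and r: "0 \<le> r" "r < 1"
  shows "bohr_majorant a0 r \<le> a0 + (1 - a0) * bohr_majorant 0 r"
proof -
  define P where "P = r / (1 - r)"
  define Q where "Q = r\<^sup>2 / (1 - r\<^sup>2)"
  define u where "u = 1 / (1 + a0)"
  have "r\<^sup>2 < 1"
    using r by (simp add: power_less_one_iff)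
  then have PQ: "0 \<le> P" "0 \<le> Q"
    using r by (simp_all add: P_def Q_def)
  have "(1 - a0) * u \<le> 1" "(1 - a0) * P \<le> P"
    using a0 PQ by (simp_all add: u_def mult_left_le_one_le)
  then have "(1 - a0) * (u + P) \<le> 1 + P"
    by (simp add: algebra_simps)
  have "bohr_majorant a0 r = a0 + 2 * (1 - a0) * P + 4 * (1 - a0) * Q * ((1 - a0) * (u + P))"
    unfolding bohr_majorant_def P_def[symmetric] Q_def[symmetric] u_def[symmetric]
    by (simp add: algebra_simps power2_eq_square)
  also have "\<dots> \<le> a0 + 2 * (1 - a0) * P + 4 * (1 - a0) * Q * (1 + P)"
    using \<open>(1 - a0) * (u + P) \<le> 1 + P\<close> a0 PQ by (simp add: mult_left_mono)
  also have "\<dots> = a0 + (1 - a0) * bohr_majorant 0 r"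
    unfolding bohr_majorant_zero P_def[symmetric] Q_def[symmetric] by (simp add: algebra_simps)
  finally show ?thesis .
qed

lemma bohr_majorant_zero_mono:
  assumes "0 \<le> r" "r \<le> s" "s < 1"
  shows "bohr_majorant 0 r \<le> bohr_majorant 0 s"
proof -
  have "r\<^sup>2 < 1" "s\<^sup>2 < 1"
    using assms by (simp_all add: power_less_one_iff)
  then have "0 \<le> r / (1 - r)" "0 \<le> r\<^sup>2 / (1 - r\<^sup>2)"
    using assms by simp_all
  moreover have "r / (1 - r) \<le> s / (1 - s)"
    using assms by (intro frac_le) simp_all
  moreover have "r\<^sup>2 / (1 - r\<^sup>2) \<le> s\<^sup>2 / (1 - s\<^sup>2)"
    using assms \<open>s\<^sup>2 < 1\<close> by (intro frac_le power_mono) (simp_all add: power_mono)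
  ultimately show ?thesis
    unfolding bohr_majorant_zero by (intro add_mono mult_mono) simp_all
qed

lemma bohr_majorant_zero_sub_one:
  assumes "0 \<le> r" "r < 1"
  shows "(bohr_majorant 0 r - 1) * ((1 - r) * (1 - r\<^sup>2)) = - (3 * r^3 - 5 * r\<^sup>2 - 3 * r + 1)"
proof -
  define P where "P = r / (1 - r)"
  define Q where "Q = r\<^sup>2 / (1 - r\<^sup>2)"
  have "r\<^sup>2 < 1"
    using assms by (simp add: power_less_one_iff)
  then have P: "P * (1 - r) = r" and Q: "Q * (1 - r\<^sup>2) = r\<^sup>2"
    using assms by (simp_all add: P_def Q_def)
  have "(bohr_majorant 0 r - 1) * ((1 - r) * (1 - r\<^sup>2))
      = 2 * (P * (1 - r)) * (1 - r\<^sup>2) + 4 * (Q * (1 - r\<^sup>2)) * (P * (1 - r) + (1 - r))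
        - (1 - r) * (1 - r\<^sup>2)"
    unfolding bohr_majorant_zero P_def[symmetric] Q_def[symmetric] by (simp add: algebra_simps)
  also have "\<dots> = - (3 * r^3 - 5 * r\<^sup>2 - 3 * r + 1)"
    unfolding P Q by (simp add: algebra_simps power2_eq_square power3_eq_cube)
  finally show ?thesis .
qed

lemma cubic_neg_above_root:
  fixes R r :: real
  assumes R: "0 < R" "R < 1" "3 * R^3 - 5 * R\<^sup>2 - 3 * R + 1 = 0" and r: "R < r" "r < 1"
  shows "3 * r^3 - 5 * r\<^sup>2 - 3 * r + 1 < 0"
proof -
  have "3 * r^3 - 5 * r\<^sup>2 - 3 * r + 1 = (r - R) * (3 * (r\<^sup>2 + r * R + R\<^sup>2) - 5 * (r + R) - 3)"
    using R(3) by (simp add: algebra_simps power2_eq_square power3_eq_cube)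
  moreover have "r\<^sup>2 < r" "r * R < r" "R\<^sup>2 < R"
    using R r by (simp_all add: power2_eq_square)
  then have "3 * r\<^sup>2 + 3 * (r * R) + 3 * R\<^sup>2 - 5 * r - 5 * R - 3 < 0"
    using R r by linarith
  then have "3 * (r\<^sup>2 + r * R + R\<^sup>2) - 5 * (r + R) - 3 < 0"
    by (simp add: algebra_simps)
  ultimately show ?thesis
    using r by (simp add: mult_pos_neg)
qed

lemma bohr_majorant_le_one:
  assumes R: "0 < R" "R < 1" "3 * R^3 - 5 * R\<^sup>2 - 3 * R + 1 = 0"
    and a0: "0 \<le> a0" "a0 \<le> 1" and r: "0 \<le> r" "r \<le> R"
  shows "bohr_majorant a0 r \<le> 1"
proof -
  have "(1 - R) * (1 - R\<^sup>2) \<noteq> 0"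
    using R by (simp add: power_less_one_iff less_imp_neq)
  then have "bohr_majorant 0 R = 1"
    using bohr_majorant_zero_sub_one[of R] R by simp
  have "bohr_majorant a0 r \<le> a0 + (1 - a0) * bohr_majorant 0 r"
    using a0 r R by (intro bohr_majorant_le_affine) simp_all
  also have "\<dots> \<le> a0 + (1 - a0) * bohr_majorant 0 R"
    using a0 r R by (simp add: mult_left_mono bohr_majorant_zero_mono)
  finally show ?thesis
    using \<open>bohr_majorant 0 R = 1\<close> by simp
qed

lemma Ecal_le_1_below_root:
  assumes R: "0 < R" "R < 1" "3 * R^3 - 5 * R\<^sup>2 - 3 * R + 1 = 0"
    and a: "slice_regular_series a" and re_le: "\<forall>x. onorm x < 1 \<longrightarrow> ore (oseries a x) \<le> 1"
    and a0: "a 0 = oct_of_real a0" "0 \<le> a0" "a0 < 1" and x: "onorm x < 1" "onorm x \<le> R"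
  shows "Ecal_le_1 a a0 x"
proof -
  have norm_a0: "onorm (a 0) \<le> a0"
    using a0 by (simp add: onorm_oct_of_real)
  have coeff: "\<And>k. 1 \<le> k \<Longrightarrow> onorm (a k) \<le> 2 * (1 - a0)"
    using onorm_coeff_le[OF a re_le a0(1)] .
  have "bohr_majorant a0 (onorm x) \<le> 1"
    using a0 by (intro bohr_majorant_le_one[OF R _ _ onorm_nonneg x(2)]) simp_all
  then show ?thesis
    using Ecal_le_bohr_majorant[of a a0 x, OF norm_a0 coeff x(1)] by (simp add: Ecal_le_1_def)
qed

lemma one_less_bohr_majorant:
  assumes R: "0 < R" "R < 1" "3 * R^3 - 5 * R\<^sup>2 - 3 * R + 1 = 0" and r: "R < r" "r < 1"
  shows "1 < bohr_majorant 0 r"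
proof -
  have "0 < (1 - r) * (1 - r\<^sup>2)"
    using R r by (simp add: power_less_one_iff)
  moreover have "0 < (bohr_majorant 0 r - 1) * ((1 - r) * (1 - r\<^sup>2))"
    using bohr_majorant_zero_sub_one[of r] cubic_neg_above_root[OF R r] R r by simp
  ultimately show ?thesis
    using zero_less_mult_pos2 by fastforce
qed

section \<open>Sharpness\<close>

definition extremal_coeff :: "nat \<Rightarrow> octo" where
  "extremal_coeff k = oct_of_real (if k = 0 then 0 else -2)"

lemma Re_inverse_one_minus_ge:
  fixes w :: complex
  assumes "norm w < 1"
  shows "1 / 2 \<le> Re (1 / (1 - w))"
proof -
  have uv: "(Re w)\<^sup>2 + (Im w)\<^sup>2 < 1"
    using assms by (simp add: norm_complex_def real_sqrt_lt_1_iff)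
  have "Re w < 1"
    using abs_Re_le_cmod[of w] assms by linarith
  then have "0 < (1 - Re w)\<^sup>2 + (Im w)\<^sup>2"
    by (simp add: add_pos_nonneg)
  moreover have "(1 - Re w)\<^sup>2 + (Im w)\<^sup>2 \<le> 2 * (1 - Re w)"
    using uv by (simp add: power2_eq_square algebra_simps)
  ultimately show ?thesis
    by (simp add: Re_divide pos_le_divide_eq)
qed

lemma slice_regular_series_extremal: "slice_regular_series extremal_coeff"
  by (rule slice_regular_series_bounded[of _ 2]) (simp add: extremal_coeff_def onorm_oct_of_real)

lemma ore_oseries_extremal_le:
  assumes x: "onorm x < 1"
  shows "ore (oseries extremal_coeff x) \<le> 1"
proof -
  obtain I w where I: "unit_imag I" and xw: "x = slice_emb I w"
    using octo_in_slice by blast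
  have w: "norm w < 1"
    using x by (simp add: xw onorm_slice_emb[OF I])
  define z where "z = 1 / (1 - w)"
  have "(\<lambda>m. slice_proj I (extremal_coeff m) * w ^ m) sums slice_proj I (oseries extremal_coeff x)"
    unfolding xw by (rule slice_proj_oseries_sums[OF slice_regular_series_extremal I w])
  moreover have "(\<lambda>m. slice_proj I (extremal_coeff m) * w ^ m) sums (2 - 2 * z)"
  proof -
    have "(\<lambda>m. -2 * w ^ m + (if m = 0 then 2 else 0)) sums (-2 * z + 2)"
      unfolding z_def by (intro sums_add sums_mult geometric_sums w sums_single)
    moreover have "(\<lambda>m. -2 * w ^ m + (if m = 0 then 2 else 0)) = (\<lambda>m. slice_proj I (extremal_coeff m) * w ^ m)"
      by (auto simp: extremal_coeff_def slice_proj_oct_of_real[OF I])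
    ultimately show ?thesis
      by (simp add: algebra_simps)
  qed
  ultimately have "slice_proj I (oseries extremal_coeff x) = 2 - 2 * z"
    by (rule sums_unique2)
  then have "ore (oseries extremal_coeff x) = Re (2 - 2 * z)"
    by (metis slice_proj_def complex.sel(1))
  then show ?thesis
    using Re_inverse_one_minus_ge[OF w] by (simp add: z_def[symmetric])
qed

lemma Ecal_extremal:
  assumes r: "0 \<le> r" "r < 1"
  shows "Ecal extremal_coeff 0 (oct_of_real r) = bohr_majorant 0 r"
proof -
  define t where "t k = onorm (omult (opow (oct_of_real r) k) (extremal_coeff k))" for k
  have t: "t 0 = 0" "t (Suc k) = 2 * r * r ^ k" for k
    using r by (simp_all add: t_def onorm_omult onorm_opow onorm_oct_of_real extremal_coeff_def)
  have "(\<lambda>k. t (Suc k)) sums (2 * r * (1 / (1 - r)))"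
    unfolding t using r by (intro sums_mult geometric_sums) simp
  then have "t sums (2 * r * (1 / (1 - r)) + t 0)"
    by (simp only: sums_Suc_iff)
  then have "t sums (2 * (r / (1 - r)))"
    by (simp add: t)
  moreover have "(\<lambda>k. (t (Suc k))\<^sup>2) sums (4 * r\<^sup>2 * (1 / (1 - r\<^sup>2)))"
  proof -
    have "(\<lambda>k. 4 * r\<^sup>2 * (r\<^sup>2) ^ k) sums (4 * r\<^sup>2 * (1 / (1 - r\<^sup>2)))"
      using r by (intro sums_mult geometric_sums) (simp add: power_less_one_iff)
    then show ?thesis
      by (simp add: t power_mult_distrib flip: power_mult) (simp add: mult.commute)
  qed
  ultimately show ?thesis
    unfolding Ecal_def t_def[symmetric] bohr_majorant_zero onorm_oct_of_real
    using r by (simp add: sums_iff algebra_simps)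
qed

lemma not_Ecal_le_1_extremal:
  assumes R: "0 < R" "R < 1" "3 * R^3 - 5 * R\<^sup>2 - 3 * R + 1 = 0" and r: "R < r" "r < 1"
  shows "\<not> Ecal_le_1 extremal_coeff 0 (oct_of_real r)"
  using Ecal_extremal[of r] one_less_bohr_majorant[OF R r] R r by (simp add: Ecal_le_1_def)

theorem theorem1p6:
  fixes R :: real
  assumes R_root: "0 < R" "R < 1" "3 * R^3 - 5 * R^2 - 3 * R + 1 = 0"
  shows
    "(\<forall>(a :: nat \<Rightarrow> octo) (a0 :: real).
        slice_regular_series a
        \<and> (\<forall>x. onorm x < 1 \<longrightarrow> ore (oseries a x) \<le> 1)
        \<and> a 0 = oct_of_real a0 \<and> 0 \<le> a0 \<and> a0 < 1
        \<longrightarrow> (\<forall>x. onorm x < 1 \<and> onorm x \<le> R \<longrightarrow> Ecal_le_1 a a0 x))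
     \<and> (\<forall>r. R < r \<and> r < 1 \<longrightarrow>
        (\<exists>(a :: nat \<Rightarrow> octo) (a0 :: real).
           slice_regular_series a
           \<and> (\<forall>x. onorm x < 1 \<longrightarrow> ore (oseries a x) \<le> 1)
           \<and> a 0 = oct_of_real a0 \<and> 0 \<le> a0 \<and> a0 < 1
           \<and> (\<exists>x. onorm x = r \<and> \<not> Ecal_le_1 a a0 x)))"
proof (intro conjI allI impI; elim conjE)
  fix a a0 x
  assume "slice_regular_series a" "\<forall>x. onorm x < 1 \<longrightarrow> ore (oseries a x) \<le> 1"
    "a 0 = oct_of_real a0" "0 \<le> a0" "a0 < 1" "onorm x < 1" "onorm x \<le> R"
  then show "Ecal_le_1 a a0 x"
    by (rule Ecal_le_1_below_root[OF R_root])
next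
  fix r assume r: "R < r" "r < 1"
  then have "onorm (oct_of_real r) = r"
    using R_root by (simp add: onorm_oct_of_real)
  then show "\<exists>a a0. slice_regular_series a \<and> (\<forall>x. onorm x < 1 \<longrightarrow> ore (oseries a x) \<le> 1)
      \<and> a 0 = oct_of_real a0 \<and> 0 \<le> a0 \<and> a0 < 1 \<and> (\<exists>x. onorm x = r \<and> \<not> Ecal_le_1 a a0 x)"
    using slice_regular_series_extremal ore_oseries_extremal_le not_Ecal_le_1_extremal[OF R_root r]
    by (intro exI[of _ extremal_coeff] exI[of _ 0]) (auto simp: extremal_coeff_def)
qed

end
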